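(* Let $\beta>0$ and let $N$ be a nonnegative integer random variable with $P(N\ge n)=1-e^{-\beta/n}$ for all integers $n\ge1$. Consider the one-dimensional oriented percolation with random range with $p=1$ (every bond of $G_{\mathbf N}$ is open). Then $\theta(1,0)=P(0\to\infty)=0$ if $\beta<1$, and $\theta(1,0)>0$ if $\beta>1$.
   Context: One-dimensional percolation with random range (equivalently, the APRR model with $q=0$, restricted to the line through the origin in direction $\vec e_1$). Let $\mathbf N=(N_i)_{i\in\mathbb{Z}}$ be i.i.d. with law $N$, and let $G_{\mathbf N}$ be the oriented graph on $\mathbb{Z}$ with bonds $\{(i,i+n): i\in\mathbb{Z},\ 1\le n\le N_i\}$. Given $p\in[0,1]$, each bond of $G_{\mathbf N}$ is open independently with probability $p$. $(0\to\infty)$ is the event that $0$ is connected by oriented open paths to infinitely many vertices, and $\theta(p,0)=P(0\to\infty)$. *)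

theory Defs
  imports "HOL-Probability.Probability"
begin

text \<open>Oriented graph G_N on the integers: bonds (i, i+n) with 1 <= n <= Nv i.\<close>
definition open_bond :: "(int \<Rightarrow> nat) \<Rightarrow> (int \<Rightarrow> nat \<Rightarrow> bool) \<Rightarrow> int \<Rightarrow> int \<Rightarrow> bool" where
  "open_bond Nv opn i j \<longleftrightarrow> i < j \<and> j - i \<le> int (Nv i) \<and> opn i (nat (j - i))"

definition connected_to :: "(int \<Rightarrow> nat) \<Rightarrow> (int \<Rightarrow> nat \<Rightarrow> bool) \<Rightarrow> int \<Rightarrow> int \<Rightarrow> bool" where
  "connected_to Nv opn i j \<longleftrightarrow> (open_bond Nv opn)\<^sup>*\<^sup>* i j"

definition percolates :: "(int \<Rightarrow> nat) \<Rightarrow> (int \<Rightarrow> nat \<Rightarrow> bool) \<Rightarrow> bool" where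
  "percolates Nv opn \<longleftrightarrow> infinite {j. connected_to Nv opn 0 j}"

end

theory Submission
  imports Defs
begin

text \<open>With every bond open, the cluster of 0 is finite iff some n \<ge> 1 is a cut point, i.e. no
  site i < n reaches n or beyond. The cut at n has probability
  \<Prod>i<n. P(N \<le> n - 1 - i) = exp (- \<beta> H_n) \<asymp> n^(-\<beta>). Cut points form a renewal process: the
  event that the first cut is at k and the event that no site of [k, n) jumps past n depend on
  disjoint blocks of sites, so u_n = P(n is a cut) satisfies u_n = \<Sum>_k f_k u_(n-k) with f_k the
  law of the first cut. Summing the renewal equation shows that the probability of never meeting
  a cut is positive iff \<Sum> u_n < \<infinity>, i.e. iff \<beta> > 1.\<close>

lemma sets_PiM_count_space_finite:
  fixes K :: "'i set"
  assumes "finite K" "A \<subseteq> space (PiM K (\<lambda>_. count_space (UNIV::'b::countable set)))"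
  shows "A \<in> sets (PiM K (\<lambda>_. count_space (UNIV::'b set)))"
proof (rule sets.countable)
  fix a assume "a \<in> A"
  then have "a \<in> PiE K (\<lambda>_. UNIV)" using assms(2) by (auto simp: space_PiM)
  then have "{a} = PiE K (\<lambda>i. {a i})"
    by (simp add: PiE_singleton PiE_iff)
  then show "{a} \<in> sets (PiM K (\<lambda>_. count_space (UNIV::'b set)))"
    using assms(1) by (simp add: sets_PiM_I_finite)
next
  have "countable (PiE K (\<lambda>_. (UNIV::'b set)))" using assms(1) by (intro countable_PiE) auto
  then show "countable A" using assms(2) by (auto simp: space_PiM intro: countable_subset)
qed

lemma (in prob_space) prob_restrict_conj_indep:
  fixes X :: "'i \<Rightarrow> 'a \<Rightarrow> 'b::countable"
  assumes indep: "indep_vars (\<lambda>_. count_space UNIV) X I"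
    and "J \<subseteq> I" "K \<subseteq> I" "J \<inter> K = {}" "finite J" "finite K"
  shows "prob {\<omega> \<in> space M. P (restrict (\<lambda>i. X i \<omega>) J) \<and> Q (restrict (\<lambda>i. X i \<omega>) K)} =
         prob {\<omega> \<in> space M. P (restrict (\<lambda>i. X i \<omega>) J)} *
         prob {\<omega> \<in> space M. Q (restrict (\<lambda>i. X i \<omega>) K)}"
proof -
  define L where "L b = (if b then J else K)" for b
  define A where "A b = {x \<in> space (PiM (L b) (\<lambda>_. count_space (UNIV::'b set))). if b then P x else Q x}"
    for b
  define E where "E b = (\<lambda>\<omega>. restrict (\<lambda>i. X i \<omega>) (L b)) -` A b \<inter> space M" for b
  have "indep_vars (\<lambda>b. PiM (L b) (\<lambda>_. count_space UNIV)) (\<lambda>b \<omega>. restrict (\<lambda>i. X i \<omega>) (L b)) UNIV"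
    using assms by (intro indep_vars_restrict[OF indep]) (auto simp: L_def disjoint_family_on_def)
  then have "prob (\<Inter>b\<in>UNIV. E b) = (\<Prod>b\<in>UNIV. prob (E b))"
    unfolding E_def using assms(5,6)
    by (intro indep_varsD_finite) (auto simp: A_def L_def intro!: sets_PiM_count_space_finite)
  moreover have "E True = {\<omega> \<in> space M. P (restrict (\<lambda>i. X i \<omega>) J)}"
    and "E False = {\<omega> \<in> space M. Q (restrict (\<lambda>i. X i \<omega>) K)}"
    by (auto simp: E_def A_def L_def space_PiM)
  moreover have "(\<Inter>b\<in>UNIV. E b) =
      {\<omega> \<in> space M. P (restrict (\<lambda>i. X i \<omega>) J) \<and> Q (restrict (\<lambda>i. X i \<omega>) K)}"
    by (auto simp: E_def A_def L_def space_PiM UNIV_bool)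
  ultimately show ?thesis by (simp add: UNIV_bool mult.commute)
qed

lemma sum_inverse_diff_eq_harm:
  "k \<le> n \<Longrightarrow> (\<Sum>i=k..<n. 1 / real (n - i)) = harm (n - k)"
  unfolding harm_def
  by (rule sum.reindex_bij_witness[where i="\<lambda>j. n - j" and j="\<lambda>i. n - i"])
     (auto simp: inverse_eq_divide)

section \<open>Renewal sequences\<close>

lemma renewal_partial_sum:
  fixes f u :: "nat \<Rightarrow> real"
  assumes u0: "u 0 = 1"
    and renewal: "\<And>n. 1 \<le> n \<Longrightarrow> u n = (\<Sum>k=1..n. f k * u (n - k))"
  shows "(\<Sum>n\<le>L. u n) = 1 + (\<Sum>k=1..L. f k * (\<Sum>m\<le>L - k. u m))"
proof (induction L)
  case 0
  then show ?case using u0 by simp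
next
  case (Suc L)
  have "(\<Sum>k=1..L. f k * (\<Sum>m\<le>Suc L - k. u m)) =
        (\<Sum>k=1..L. f k * (\<Sum>m\<le>L - k. u m)) + (\<Sum>k=1..L. f k * u (Suc L - k))"
    by (auto simp: Suc_diff_le sum.distrib distrib_left intro!: sum.cong)
  moreover have "(\<Sum>k=1..Suc L. f k * u (Suc L - k)) = u (Suc L)"
    using renewal[of "Suc L"] by simp
  ultimately show ?case
    using Suc.IH u0 by simp
qed

context
  fixes f u :: "nat \<Rightarrow> real"
  assumes u0: "u 0 = 1"
    and renewal: "\<And>n. 1 \<le> n \<Longrightarrow> u n = (\<Sum>k=1..n. f k * u (n - k))"
    and f_nonneg: "\<And>k. 0 \<le> f k"
    and u_nonneg: "\<And>n. 0 \<le> u n"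
begin

lemma renewal_partial_sum_ge_1: "1 \<le> (\<Sum>n\<le>L. u n)"
proof -
  have "0 \<le> (\<Sum>k=1..L. f k * (\<Sum>m\<le>L - k. u m))"
    by (intro sum_nonneg mult_nonneg_nonneg f_nonneg u_nonneg)
  then show ?thesis
    using renewal_partial_sum[OF u0 renewal, of L] by linarith
qed

lemma renewal_no_return_le:
  "(1 - (\<Sum>k=1..L. f k)) * (\<Sum>n\<le>L. u n) \<le> 1"
proof -
  have "(\<Sum>n\<le>L. u n) - 1 = (\<Sum>k=1..L. f k * (\<Sum>m\<le>L - k. u m))"
    using renewal_partial_sum[OF u0 renewal, of L] by linarith
  also have "\<dots> \<le> (\<Sum>k=1..L. f k * (\<Sum>n\<le>L. u n))"
    by (intro sum_mono mult_left_mono) (auto intro!: sum_mono2 u_nonneg f_nonneg)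
  also have "\<dots> = (\<Sum>k=1..L. f k) * (\<Sum>n\<le>L. u n)"
    by (rule sum_distrib_right[symmetric])
  finally show ?thesis by (simp add: left_diff_distrib)
qed

lemma renewal_return_le:
  "(\<Sum>k=1..K. f k) * (\<Sum>n\<le>L. u n) \<le> (\<Sum>n\<le>K + L. u n) - 1"
proof -
  have "(\<Sum>k=1..K. f k) * (\<Sum>n\<le>L. u n) \<le> (\<Sum>k=1..K. f k * (\<Sum>m\<le>K + L - k. u m))"
    unfolding sum_distrib_right
    by (intro sum_mono mult_left_mono) (auto intro!: sum_mono2 u_nonneg f_nonneg)
  also have "\<dots> \<le> (\<Sum>k=1..K + L. f k * (\<Sum>m\<le>K + L - k. u m))"
    by (intro sum_mono2) (auto intro!: sum_nonneg mult_nonneg_nonneg f_nonneg u_nonneg)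
  also have "\<dots> = (\<Sum>n\<le>K + L. u n) - 1"
    using renewal_partial_sum[OF u0 renewal, of "K + L"] by linarith
  finally show ?thesis .
qed

lemma renewal_no_return_tendsto_0:
  assumes "filterlim (\<lambda>L. \<Sum>n\<le>L. u n) at_top sequentially"
    and "\<And>L. (\<Sum>k=1..L. f k) \<le> 1"
  shows "(\<lambda>L. 1 - (\<Sum>k=1..L. f k)) \<longlonglongrightarrow> 0"
proof (rule tendsto_sandwich)
  show "\<forall>\<^sub>F L in sequentially. 0 \<le> 1 - (\<Sum>k=1..L. f k)"
    using assms(2) by simp
  show "\<forall>\<^sub>F L in sequentially. 1 - (\<Sum>k=1..L. f k) \<le> inverse (\<Sum>n\<le>L. u n)"
  proof (intro always_eventually allI)
    fix L
    have "0 < (\<Sum>n\<le>L. u n)"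
      using renewal_partial_sum_ge_1[of L] by linarith
    then show "1 - (\<Sum>k=1..L. f k) \<le> inverse (\<Sum>n\<le>L. u n)"
      using renewal_no_return_le[of L] by (simp add: inverse_eq_divide pos_le_divide_eq)
  qed
  show "(\<lambda>L. inverse (\<Sum>n\<le>L. u n)) \<longlonglongrightarrow> 0"
    using assms(1) by (rule tendsto_inverse_0_at_top)
qed simp

lemma renewal_no_return_bounded_below:
  assumes "summable u"
  shows "\<exists>\<delta>>0. \<forall>K. \<delta> \<le> 1 - (\<Sum>k=1..K. f k)"
proof -
  define T where "T = suminf u"
  have partial_le: "(\<Sum>n\<le>L. u n) \<le> T" for L
    unfolding T_def atMost_atLeast0 atLeastLessThanSuc_atLeastAtMost[symmetric]
    using assms u_nonneg by (intro sum_le_suminf) auto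
  have "(\<lambda>L. \<Sum>n\<le>L. u n) \<longlonglongrightarrow> T"
    unfolding T_def using assms by (rule summable_LIMSEQ')
  then have "\<forall>\<^sub>F L in sequentially. T - 1/2 < (\<Sum>n\<le>L. u n)"
    by (rule order_tendstoD) simp
  then obtain L where L: "T - 1/2 < (\<Sum>n\<le>L. u n)"
    by (auto simp: eventually_sequentially)
  have pos: "1 \<le> (\<Sum>n\<le>L. u n)" by (rule renewal_partial_sum_ge_1)
  have "1 - (T - 1) / (\<Sum>n\<le>L. u n) \<le> 1 - (\<Sum>k=1..K. f k)" for K
  proof -
    have "(\<Sum>k=1..K. f k) * (\<Sum>n\<le>L. u n) \<le> T - 1"
      using renewal_return_le[of K L] partial_le[of "K + L"] by simp
    then show ?thesis
      using pos by (simp add: field_simps)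
  qed
  moreover have "0 < 1 - (T - 1) / (\<Sum>n\<le>L. u n)"
    using L pos by (simp add: field_simps)
  ultimately show ?thesis by blast
qed

end

section \<open>Cut points of a range configuration\<close>

text \<open>For a range configuration x (site i has bonds to i+1, ..., i + x i), cut_between x k n says
  that no site of [k, n) has a bond to n or beyond; cut_between x 0 n says that n is a cut point,
  which confines the open cluster of 0 to [0, n) when all bonds are open.\<close>

definition cut_between :: "(int \<Rightarrow> nat) \<Rightarrow> nat \<Rightarrow> nat \<Rightarrow> bool" where
  "cut_between x k n \<longleftrightarrow> (\<forall>i. k \<le> i \<and> i < n \<longrightarrow> x (int i) + i < n)"

definition first_cut :: "(int \<Rightarrow> nat) \<Rightarrow> nat \<Rightarrow> bool" where
  "first_cut x k \<longleftrightarrow> 1 \<le> k \<and> cut_between x 0 k \<and> (\<forall>j\<in>{1..<k}. \<not> cut_between x 0 j)"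

lemma cut_between_restrict: "cut_between (restrict x (int ` {k..<n})) k n = cut_between x k n"
  by (auto simp: cut_between_def)

lemma first_cut_restrict: "first_cut (restrict x (int ` {..<k})) k = first_cut x k"
  by (auto simp: first_cut_def cut_between_def)

lemma cut_between_mono: "cut_between x 0 n \<Longrightarrow> cut_between x k n"
  by (simp add: cut_between_def)

lemma first_cut_unique: "first_cut x k \<Longrightarrow> first_cut x k' \<Longrightarrow> k = k'"
  unfolding first_cut_def by (metis atLeastLessThan_iff linorder_neqE_nat)

lemma exists_first_cut:
  assumes "1 \<le> n" "cut_between x 0 n"
  obtains k where "k \<in> {1..n}" "first_cut x k"
proof
  define k where "k = (LEAST j. 1 \<le> j \<and> cut_between x 0 j)"
  have "1 \<le> k \<and> cut_between x 0 k"
    unfolding k_def by (rule LeastI[of _ n]) (use assms in auto)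
  moreover have "\<not> cut_between x 0 j" if "j \<in> {1..<k}" for j
    using not_less_Least[of j "\<lambda>j. 1 \<le> j \<and> cut_between x 0 j"] that
    unfolding k_def[symmetric] by auto
  ultimately show "first_cut x k" by (simp add: first_cut_def)
  show "k \<in> {1..n}"
    using \<open>1 \<le> k \<and> _\<close> Least_le[of "\<lambda>j. 1 \<le> j \<and> cut_between x 0 j" n] assms
    unfolding k_def by auto
qed

lemma cut_iff_first_cut:
  assumes "1 \<le> n"
  shows "cut_between x 0 n \<longleftrightarrow> (\<exists>k\<in>{1..n}. first_cut x k \<and> cut_between x k n)"
proof
  assume "cut_between x 0 n"
  then show "\<exists>k\<in>{1..n}. first_cut x k \<and> cut_between x k n"
    using assms by (metis exists_first_cut cut_between_mono)
next
  assume "\<exists>k\<in>{1..n}. first_cut x k \<and> cut_between x k n"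
  then obtain k where "k \<le> n" "cut_between x 0 k" "cut_between x k n"
    by (auto simp: first_cut_def)
  then show "cut_between x 0 n"
    unfolding cut_between_def by (metis not_le order.strict_trans2)
qed

lemma connected_to_below_cut:
  assumes "cut_between x 0 n" "1 \<le> n" "connected_to x (\<lambda>_ _. True) 0 j"
  shows "0 \<le> j \<and> j < int n"
  using assms(3) unfolding connected_to_def
proof (induction rule: rtranclp_induct)
  case (step i j)
  then have "0 \<le> i" "i < int n" "i < j" "j \<le> i + int (x i)"
    by (auto simp: open_bond_def)
  moreover have "x (int (nat i)) + nat i < n"
    using assms(1) \<open>i < int n\<close> unfolding cut_between_def by (metis le0 nat_less_iff \<open>0 \<le> i\<close>)
  ultimately show ?case by simp
qed (use assms(2) in simp)

lemma connected_to_if_no_cut: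
  assumes "\<And>n. 1 \<le> n \<Longrightarrow> \<not> cut_between x 0 n"
  shows "connected_to x (\<lambda>_ _. True) 0 (int m)"
proof (induction m rule: less_induct)
  case (less m)
  show ?case
  proof (cases "m = 0")
    case True
    then show ?thesis by (simp add: connected_to_def)
  next
    case False
    then obtain i where "i < m" "m \<le> x (int i) + i"
      using assms[of m] by (auto simp: cut_between_def not_less)
    then have "open_bond x (\<lambda>_ _. True) (int i) (int m)"
      by (auto simp: open_bond_def)
    with less \<open>i < m\<close> show ?thesis
      unfolding connected_to_def by (meson rtranclp.rtrancl_into_rtrancl)
  qed
qed

lemma percolates_iff_no_cut:
  "percolates x (\<lambda>_ _. True) \<longleftrightarrow> (\<forall>n\<ge>1. \<not> cut_between x 0 n)"
proof
  assume "percolates x (\<lambda>_ _. True)"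
  moreover have "finite {j. connected_to x (\<lambda>_ _. True) 0 j}" if "cut_between x 0 n" "1 \<le> n" for n
    using connected_to_below_cut[OF that] by (auto intro: finite_subset[of _ "{0..<int n}"])
  ultimately show "\<forall>n\<ge>1. \<not> cut_between x 0 n"
    unfolding percolates_def by blast
next
  assume "\<forall>n\<ge>1. \<not> cut_between x 0 n"
  then have "range int \<subseteq> {j. connected_to x (\<lambda>_ _. True) 0 j}"
    using connected_to_if_no_cut by auto
  moreover have "infinite (range int)"
    by (simp add: finite_image_iff)
  ultimately show "percolates x (\<lambda>_ _. True)"
    unfolding percolates_def using finite_subset by blast
qed

section \<open>Percolation with random range and all bonds open\<close>

locale random_range_percolation = prob_space M for M :: "'a measure" +
  fixes N :: "int \<Rightarrow> 'a \<Rightarrow> nat" and \<beta> :: real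
  assumes indep_range: "indep_vars (\<lambda>_. count_space UNIV) N UNIV"
    and prob_range_ge: "\<And>i n. n \<ge> 1 \<Longrightarrow> prob {\<omega> \<in> space M. N i \<omega> \<ge> n} = 1 - exp (- \<beta> / real n)"
begin

definition cut_prob :: "nat \<Rightarrow> real" where
  "cut_prob n = exp (- \<beta> * harm n)"

definition first_cut_prob :: "nat \<Rightarrow> real" where
  "first_cut_prob k = prob {\<omega> \<in> space M. first_cut (\<lambda>i. N i \<omega>) k}"

lemma measurable_range[measurable]: "N i \<in> measurable M (count_space UNIV)"
  using indep_range unfolding indep_vars_def by auto

lemma pred_cut_between[measurable]: "Measurable.pred M (\<lambda>\<omega>. cut_between (\<lambda>i. N i \<omega>) k n)"
  unfolding cut_between_def by measurable

lemma pred_first_cut[measurable]: "Measurable.pred M (\<lambda>\<omega>. first_cut (\<lambda>i. N i \<omega>) k)"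
  unfolding first_cut_def by measurable

lemma prob_range_le: "prob {\<omega> \<in> space M. N i \<omega> \<le> j} = exp (- \<beta> / (real j + 1))"
proof -
  have "{\<omega> \<in> space M. N i \<omega> \<le> j} = space M - {\<omega> \<in> space M. N i \<omega> \<ge> Suc j}"
    by auto
  then show ?thesis
    using prob_range_ge[of "Suc j" i] by (simp add: prob_compl add.commute)
qed

lemma prob_cut_between:
  assumes "k \<le> n"
  shows "prob {\<omega> \<in> space M. cut_between (\<lambda>i. N i \<omega>) k n} = cut_prob (n - k)"
proof (cases "k = n")
  case True
  then show ?thesis by (simp add: cut_between_def cut_prob_def prob_space harm_def)
next
  case False
  let ?B = "\<lambda>j. {m. m + nat j < n}"
  have "{\<omega> \<in> space M. cut_between (\<lambda>i. N i \<omega>) k n} = (\<Inter>j\<in>int ` {k..<n}. N j -` ?B j \<inter> space M)"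
    using False assms by (auto simp: cut_between_def)
  also have "prob \<dots> = (\<Prod>j\<in>int ` {k..<n}. prob (N j -` ?B j \<inter> space M))"
    using False assms by (intro indep_varsD_finite[OF indep_vars_subset[OF indep_range]]) auto
  also have "\<dots> = (\<Prod>i=k..<n. prob (N (int i) -` ?B (int i) \<inter> space M))"
    by (subst prod.reindex) (auto simp: inj_on_def)
  also have "\<dots> = (\<Prod>i=k..<n. exp (- \<beta> * (1 / real (n - i))))"
  proof (rule prod.cong[OF refl])
    fix i assume i: "i \<in> {k..<n}"
    then have "N (int i) -` ?B (int i) \<inter> space M = {\<omega> \<in> space M. N (int i) \<omega> \<le> n - 1 - i}"
      by auto
    then show "prob (N (int i) -` ?B (int i) \<inter> space M) = exp (- \<beta> * (1 / real (n - i)))"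
      using i by (simp add: prob_range_le of_nat_diff)
  qed
  also have "\<dots> = exp (- \<beta> * (\<Sum>i=k..<n. 1 / real (n - i)))"
    by (simp only: exp_sum[OF finite_atLeastLessThan, symmetric] sum_distrib_left)
  also have "\<dots> = cut_prob (n - k)"
    using assms by (simp only: cut_prob_def sum_inverse_diff_eq_harm)
  finally show ?thesis .
qed

lemma prob_first_cut_and_cut_between:
  assumes "k \<le> n"
  shows "prob {\<omega> \<in> space M. first_cut (\<lambda>i. N i \<omega>) k \<and> cut_between (\<lambda>i. N i \<omega>) k n} =
         first_cut_prob k * cut_prob (n - k)"
proof -
  have "int ` {..<k} \<inter> int ` {k..<n} = {}" by auto
  then show ?thesis
    using prob_restrict_conj_indep[OF indep_range, of "int ` {..<k}" "int ` {k..<n}"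
        "\<lambda>x. first_cut x k" "\<lambda>x. cut_between x k n"]
    by (simp add: first_cut_restrict cut_between_restrict first_cut_prob_def
        prob_cut_between[OF assms])
qed

lemma cut_prob_renewal:
  assumes "1 \<le> n"
  shows "cut_prob n = (\<Sum>k=1..n. first_cut_prob k * cut_prob (n - k))"
proof -
  have "{\<omega> \<in> space M. cut_between (\<lambda>i. N i \<omega>) 0 n} =
      (\<Union>k\<in>{1..n}. {\<omega> \<in> space M. first_cut (\<lambda>i. N i \<omega>) k \<and> cut_between (\<lambda>i. N i \<omega>) k n})"
    using cut_iff_first_cut[OF assms] by auto
  then have "cut_prob n = prob (\<Union>k\<in>{1..n}.
      {\<omega> \<in> space M. first_cut (\<lambda>i. N i \<omega>) k \<and> cut_between (\<lambda>i. N i \<omega>) k n})"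
    using prob_cut_between[of 0 n] by simp
  also have "\<dots> = (\<Sum>k=1..n. prob
      {\<omega> \<in> space M. first_cut (\<lambda>i. N i \<omega>) k \<and> cut_between (\<lambda>i. N i \<omega>) k n})"
    by (intro finite_measure_finite_Union)
       (auto simp: disjoint_family_on_def dest: first_cut_unique)
  also have "\<dots> = (\<Sum>k=1..n. first_cut_prob k * cut_prob (n - k))"
    by (intro sum.cong refl prob_first_cut_and_cut_between) auto
  finally show ?thesis .
qed

definition no_cut_upto :: "nat \<Rightarrow> 'a set" where
  "no_cut_upto n = {\<omega> \<in> space M. \<forall>j\<in>{1..n}. \<not> cut_between (\<lambda>i. N i \<omega>) 0 j}"

lemma no_cut_upto_sets[measurable]: "no_cut_upto n \<in> events"
  unfolding no_cut_upto_def by measurable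

lemma prob_no_cut_upto: "prob (no_cut_upto n) = 1 - (\<Sum>k=1..n. first_cut_prob k)"
proof -
  have "space M - no_cut_upto n = (\<Union>k\<in>{1..n}. {\<omega> \<in> space M. first_cut (\<lambda>i. N i \<omega>) k})"
  proof (intro equalityI subsetI)
    fix \<omega> assume "\<omega> \<in> space M - no_cut_upto n"
    then obtain j where "j \<in> {1..n}" "cut_between (\<lambda>i. N i \<omega>) 0 j" "\<omega> \<in> space M"
      by (auto simp: no_cut_upto_def)
    then obtain k where "k \<in> {1..j}" "first_cut (\<lambda>i. N i \<omega>) k"
      using exists_first_cut[of j] by auto
    with \<open>j \<in> {1..n}\<close> \<open>\<omega> \<in> space M\<close>
    show "\<omega> \<in> (\<Union>k\<in>{1..n}. {\<omega> \<in> space M. first_cut (\<lambda>i. N i \<omega>) k})"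
      by auto
  qed (auto simp: no_cut_upto_def first_cut_def)
  then have "1 - prob (no_cut_upto n) = prob (\<Union>k\<in>{1..n}. {\<omega> \<in> space M. first_cut (\<lambda>i. N i \<omega>) k})"
    by (metis no_cut_upto_sets prob_compl)
  also have "\<dots> = (\<Sum>k=1..n. first_cut_prob k)"
    unfolding first_cut_prob_def
    by (intro finite_measure_finite_Union)
       (auto simp: disjoint_family_on_def dest: first_cut_unique)
  finally show ?thesis by simp
qed

end

lemma harm_le_1_plus_ln:
  assumes "1 \<le> n"
  shows "harm n \<le> 1 + ln (real n)"
proof -
  obtain m where m: "n = Suc m" using assms by (cases n) auto
  have "harm (Suc m) - ln (real (Suc m)) \<le> harm (Suc 0) - ln (real (Suc 0))"
    using decseq_harm_diff_ln unfolding decseq_def by (metis le0)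
  then show ?thesis using m by (simp add: harm_def)
qed

context random_range_percolation
begin

lemma cut_prob_0: "cut_prob 0 = 1"
  by (simp add: cut_prob_def harm_def)

lemma cut_prob_nonneg: "0 \<le> cut_prob n"
  by (simp add: cut_prob_def)

lemma first_cut_prob_nonneg: "0 \<le> first_cut_prob k"
  by (simp add: first_cut_prob_def)

lemma sum_first_cut_prob_le_1: "(\<Sum>k=1..n. first_cut_prob k) \<le> 1"
  using prob_no_cut_upto[of n] measure_nonneg[of M "no_cut_upto n"] by linarith

lemma cut_prob_ge_inverse:
  assumes "\<beta> \<le> 1" "1 \<le> n"
  shows "exp (-1) / real n \<le> cut_prob n"
proof -
  have "exp (-1) / real n = exp (-1 - ln (real n))"
    using assms(2) by (simp add: exp_diff)
  also have "\<dots> \<le> exp (- harm n)"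
    using harm_le_1_plus_ln[OF assms(2)] by simp
  also have "\<dots> \<le> cut_prob n"
    using mult_right_mono[OF assms(1) harm_nonneg[of n]] by (simp add: cut_prob_def)
  finally show ?thesis .
qed

lemma sum_cut_prob_at_top:
  assumes "\<beta> \<le> 1"
  shows "filterlim (\<lambda>L. \<Sum>n\<le>L. cut_prob n) at_top sequentially"
proof (rule filterlim_at_top_mono)
  show "filterlim (\<lambda>L. exp (-1::real) * harm L) at_top sequentially"
    using filterlim_tendsto_pos_mult_at_top[of "\<lambda>_. exp (-1)" "exp (-1)" sequentially harm]
    by (simp add: harm_at_top)
  show "\<forall>\<^sub>F L in sequentially. exp (-1::real) * harm L \<le> (\<Sum>n\<le>L. cut_prob n)"
  proof (intro always_eventually allI)
    fix L
    have "exp (-1::real) * harm L = (\<Sum>n=1..L. exp (-1) / real n)"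
      by (simp add: harm_def sum_distrib_left divide_inverse)
    also have "\<dots> \<le> (\<Sum>n=1..L. cut_prob n)"
      using cut_prob_ge_inverse[OF assms] by (intro sum_mono) auto
    also have "\<dots> \<le> (\<Sum>n\<le>L. cut_prob n)"
      using cut_prob_nonneg by (intro sum_mono2) auto
    finally show "exp (-1::real) * harm L \<le> (\<Sum>n\<le>L. cut_prob n)" .
  qed
qed

lemma summable_cut_prob:
  assumes "1 < \<beta>"
  shows "summable cut_prob"
proof (rule summable_comparison_test')
  show "summable (\<lambda>n. real (Suc n) powr (- \<beta>))"
    using assms summable_Suc_iff[of "\<lambda>n. real n powr (- \<beta>)"] by (simp add: summable_real_powr_iff)
  fix n
  have "cut_prob n \<le> exp (- \<beta> * ln (real n + 1))"
    using ln_le_harm[of n] assms by (simp add: cut_prob_def)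
  then show "norm (cut_prob n) \<le> real (Suc n) powr (- \<beta>)"
    by (simp add: powr_def add.commute cut_prob_nonneg)
qed

lemma prob_no_cut_upto_tendsto:
  "(\<lambda>n. prob (no_cut_upto n)) \<longlonglongrightarrow> prob {\<omega> \<in> space M. percolates (\<lambda>i. N i \<omega>) (\<lambda>_ _. True)}"
proof -
  have "{\<omega> \<in> space M. percolates (\<lambda>i. N i \<omega>) (\<lambda>_ _. True)} = (\<Inter>n. no_cut_upto n)"
    by (auto simp: no_cut_upto_def percolates_iff_no_cut) (meson atLeastAtMost_iff order_refl)
  moreover have "decseq no_cut_upto"
    by (auto simp: decseq_def no_cut_upto_def)
  ultimately show ?thesis
    using finite_Lim_measure_decseq[of no_cut_upto] by (auto simp: image_subset_iff)
qed

lemma prob_percolates_eq_0: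
  assumes "\<beta> \<le> 1"
  shows "prob {\<omega> \<in> space M. percolates (\<lambda>i. N i \<omega>) (\<lambda>_ _. True)} = 0"
proof -
  have "(\<lambda>n. prob (no_cut_upto n)) \<longlonglongrightarrow> 0"
    unfolding prob_no_cut_upto
    by (rule renewal_no_return_tendsto_0[OF cut_prob_0 cut_prob_renewal first_cut_prob_nonneg
          cut_prob_nonneg sum_cut_prob_at_top[OF assms] sum_first_cut_prob_le_1])
  then show ?thesis
    using prob_no_cut_upto_tendsto LIMSEQ_unique by blast
qed

lemma prob_percolates_pos:
  assumes "1 < \<beta>"
  shows "0 < prob {\<omega> \<in> space M. percolates (\<lambda>i. N i \<omega>) (\<lambda>_ _. True)}"
proof -
  obtain \<delta> where "0 < \<delta>" "\<And>n. \<delta> \<le> 1 - (\<Sum>k=1..n. first_cut_prob k)"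
    using renewal_no_return_bounded_below[OF cut_prob_0 cut_prob_renewal first_cut_prob_nonneg
        cut_prob_nonneg summable_cut_prob[OF assms]] by blast
  then show ?thesis
    using LIMSEQ_le_const[OF prob_no_cut_upto_tendsto, of \<delta>] by (force simp: prob_no_cut_upto)
qed

end

theorem theorem5:
  fixes M :: "'a measure" and N :: "int \<Rightarrow> 'a \<Rightarrow> nat" and \<beta> :: real
  assumes "prob_space M"
    and "\<beta> > 0"
    and "prob_space.indep_vars M (\<lambda>_. count_space UNIV) N UNIV"
    and "\<And>i n. n \<ge> 1 \<Longrightarrow>
           measure M {\<omega> \<in> space M. N i \<omega> \<ge> n} = 1 - exp (- \<beta> / real n)"
  shows "(\<beta> < 1 \<longrightarrow> measure M {\<omega> \<in> space M. percolates (\<lambda>i. N i \<omega>) (\<lambda>_ _. True)} = 0)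
       \<and> (\<beta> > 1 \<longrightarrow> measure M {\<omega> \<in> space M. percolates (\<lambda>i. N i \<omega>) (\<lambda>_ _. True)} > 0)"
proof -
  interpret random_range_percolation M N \<beta>
    using assms by (intro random_range_percolation.intro random_range_percolation_axioms.intro)
  show ?thesis
    using prob_percolates_eq_0 prob_percolates_pos by simp
qed

end
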